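(* Let $\phi\ge \tfrac12$ and let $\lambda,\beta,\mu\ge 1$. On any $(\lambda,\beta,\mu)$-separable smoothed combinatorial local optimization instance with parameters $M,\nu,\bar\nu$ and density bound $\phi$, the expected value (over the random cost vector $c$) of the maximum number of steps performed by standard local search — maximum taken over all starting configurations and all sequences of improving moves, i.e. the length of a longest directed path in the transition graph — is at most $$3\cdot \mu^{\beta}\,\lambda\,\nu^2\, M\log_2(M+1)\,\phi .$$
   Context: A combinatorial local optimization (CLO) instance consists of integers $M,\nu\ge 1$, $\bar\nu\ge 0$; a finite set of feasible configurations $\mathbf S\subseteq\{0,1,\dots,M\}^{\nu}\times\{0,1\}^{\bar\nu}$, where a configuration is written $s=(s^\bullet,s^\circ)$ with cost part $s^\bullet=(s_1,\dots,s_\nu)\in\{0,\dots,M\}^\nu$; a cost vector $c\in[-1,1]^\nu$; and a neighbourhood function $N:\mathbf S\to 2^{\mathbf S}$. The cost of $s$ is $C(s)=\sum_{i=1}^\nu c_i s_i$. The neighbourhood graph is the directed graph $G=(\mathbf S,E)$ with $E=\{(s,s'): s\in\mathbf S,\ s'\in N(s)\}$; the transition graph is its subgraph with edges $\{(s,s')\in E: C(s')<C(s)\}$. Standard local search starts at an arbitrary configuration and repeatedly moves to an arbitrary neighbour of strictly smaller cost, until none exists (a local minimum). In the smoothed model, each $c_i$ is drawn independently from a continuous distribution with density $f_i:[-1,1]\to[0,\phi]$ (the $f_i$ may be chosen adversarially). For $I\subseteq[\nu]$ and a vector $x$, $x_I$ denotes the subvector of components indexed by $I$. A covering $(\mathcal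 E,\mathcal I)$ consists of $\mathcal E\subseteq 2^E$ with $\bigcup_{T\in\mathcal E}T=E$ (transition clusters) and $\mathcal I\subseteq 2^{[\nu]}$ with $\bigcup_{I\in\mathcal I}I=[\nu]$ (coordinate clusters). For $T\subseteq E$, its core is $\mathrm{core}(T)=\{i\in[\nu]: s^\bullet_i\ne s'^\bullet_i \text{ for some }(s,s')\in T\}$, and its diversity with respect to $I\subseteq[\nu]$ is $\delta_I(T)=|\{s^\bullet_I-s'^\bullet_I:(s,s')\in T\}|$. The instance is $(\lambda,\beta,\mu)$-separable if it has a covering $(\mathcal E,\mathcal I)$ with $|\mathcal E|\le\lambda$ such that every $T\in\mathcal E$ satisfies: (a) there is $\mathcal I_T\subseteq\mathcal I$ with $|\mathcal I_T|\le\beta$ and $\mathrm{core}(T)\subseteq\bigcup_{I\in\mathcal I_T}I$; (b) $\max_{I\in\mathcal I}\delta_I(T)\le\mu$. *)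

theory Defs
  imports "HOL-Probability.Probability"
begin

text \<open>A configuration s = (s_bullet, s_circ): cost part as a nat list of length nu,
  the auxiliary 0/1 part as a bool list of length nu_bar. Coordinates are 0-based:
  the index set [nu] is rendered as {..<nu}.\<close>
type_synonym config = "nat list \<times> bool list"

definition configs :: "nat \<Rightarrow> nat \<Rightarrow> nat \<Rightarrow> config set" where
  "configs M \<nu> \<nu>b = {s. length (fst s) = \<nu> \<and> (\<forall>x\<in>set (fst s). x \<le> M) \<and> length (snd s) = \<nu>b}"

definition cost :: "nat \<Rightarrow> (nat \<Rightarrow> real) \<Rightarrow> config \<Rightarrow> real" where
  "cost \<nu> c s = (\<Sum>i<\<nu>. c i * real (fst s ! i))"

definition nbh_edges :: "config set \<Rightarrow> (config \<Rightarrow> config set) \<Rightarrow> (config \<times> config) set" where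
  "nbh_edges S N = {(s, s'). s \<in> S \<and> s' \<in> N s}"

definition trans_edges :: "nat \<Rightarrow> (nat \<Rightarrow> real) \<Rightarrow> config set \<Rightarrow> (config \<Rightarrow> config set) \<Rightarrow> (config \<times> config) set" where
  "trans_edges \<nu> c S N = {(s, s') \<in> nbh_edges S N. cost \<nu> c s' < cost \<nu> c s}"

definition trans_paths :: "nat \<Rightarrow> (nat \<Rightarrow> real) \<Rightarrow> config set \<Rightarrow> (config \<Rightarrow> config set) \<Rightarrow> config list set" where
  "trans_paths \<nu> c S N = {p. p \<noteq> [] \<and> set p \<subseteq> S \<and>
      (\<forall>j < length p - 1. (p ! j, p ! Suc j) \<in> trans_edges \<nu> c S N)}"

definition max_steps :: "nat \<Rightarrow> (nat \<Rightarrow> real) \<Rightarrow> config set \<Rightarrow> (config \<Rightarrow> config set) \<Rightarrow> ennreal" where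
  "max_steps \<nu> c S N = (SUP p \<in> trans_paths \<nu> c S N. ennreal (real (length p - 1)))"

definition core :: "nat \<Rightarrow> (config \<times> config) set \<Rightarrow> nat set" where
  "core \<nu> T = {i \<in> {..<\<nu>}. \<exists>(s, s') \<in> T. fst s ! i \<noteq> fst s' ! i}"

definition diversity :: "nat set \<Rightarrow> (config \<times> config) set \<Rightarrow> nat" where
  "diversity I T = card ((\<lambda>(s, s'). restrict (\<lambda>i. int (fst s ! i) - int (fst s' ! i)) I) ` T)"

definition separable :: "nat \<Rightarrow> config set \<Rightarrow> (config \<Rightarrow> config set) \<Rightarrow> nat \<Rightarrow> nat \<Rightarrow> nat \<Rightarrow> bool" where
  "separable \<nu> S N lam \<beta> \<mu> \<longleftrightarrow>
    (\<exists>\<E> \<I>. finite \<E> \<and> (\<forall>T\<in>\<E>. T \<subseteq> nbh_edges S N) \<and> \<Union>\<E> = nbh_edges S N \<and>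
       (\<forall>I\<in>\<I>. I \<subseteq> {..<\<nu>}) \<and> \<Union>\<I> = {..<\<nu>} \<and> card \<E> \<le> lam \<and>
       (\<forall>T\<in>\<E>. (\<exists>\<I>T \<subseteq> \<I>. finite \<I>T \<and> card \<I>T \<le> \<beta> \<and> core \<nu> T \<subseteq> \<Union>\<I>T) \<and>
                (\<forall>I\<in>\<I>. diversity I T \<le> \<mu>)))"

definition smoothed_density :: "real \<Rightarrow> (real \<Rightarrow> real) \<Rightarrow> bool" where
  "smoothed_density \<phi> g \<longleftrightarrow> g \<in> borel_measurable lborel \<and>
     (\<forall>x. 0 \<le> g x \<and> g x \<le> \<phi>) \<and> (\<forall>x. x \<notin> {-1..1} \<longrightarrow> g x = 0) \<and>
     (\<integral>\<^sup>+ x. ennreal (g x) \<partial>lborel) = 1"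

end

theory Submission
  imports Defs
begin

text \<open>A path of \<open>k\<close> improving steps visits configurations with pairwise distinct cost parts, so
  \<open>k < (M+1)^\<nu>\<close>; its gains telescope to at most \<open>\<nu> M\<close>, so for every \<open>j \<le> k\<close> some step gains at
  most \<open>\<nu> M / j\<close>. The gain of a step is \<open>\<langle>d, c\<rangle>\<close> for its difference vector \<open>d\<close>, and separability
  leaves at most \<open>\<lambda> \<mu>^\<beta>\<close> such vectors. For a fixed nonzero integer vector \<open>d\<close>, conditioning on all
  coordinates but one shows \<open>P(0 < \<langle>d, c\<rangle> \<le> \<epsilon>) \<le> \<phi> \<epsilon>\<close>. Summing over \<open>j\<close> and \<open>d\<close> bounds the
  expectation by \<open>\<lambda> \<mu>^\<beta> \<phi> \<nu> M H\<^sub>L\<close> with \<open>L = (M+1)^\<nu> - 1\<close>, and \<open>H\<^sub>L \<le> 1 + ln L \<le> 2 \<nu> log\<^sub>2 (M+1)\<close>.\<close>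

section \<open>Smoothed cost vectors\<close>

lemma smoothed_density_prob_space:
  assumes "smoothed_density \<phi> g"
  shows "prob_space (density lborel (\<lambda>x. ennreal (g x)))"
proof
  have [measurable]: "g \<in> borel_measurable borel"
    using assms unfolding smoothed_density_def by simp
  show "emeasure (density lborel (\<lambda>x. ennreal (g x))) (space (density lborel (\<lambda>x. ennreal (g x)))) = 1"
    using assms unfolding smoothed_density_def by (simp add: emeasure_density)
qed

lemma emeasure_density_le_bound:
  assumes "g \<in> borel_measurable borel" and "A \<in> sets borel" and "\<And>x. g x \<le> \<phi>"
  shows "emeasure (density lborel g) A \<le> \<phi> * emeasure lborel A"
proof -
  have "emeasure (density lborel g) A = (\<integral>\<^sup>+ x. g x * indicator A x \<partial>lborel)"
    using assms(1,2) by (simp add: emeasure_density)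
  also have "\<dots> \<le> (\<integral>\<^sup>+ x. \<phi> * indicator A x \<partial>lborel)"
    using assms(3) by (intro nn_integral_mono) (simp split: split_indicator)
  also have "\<dots> = \<phi> * emeasure lborel A"
    using assms(2) by (simp add: nn_integral_cmult_indicator)
  finally show ?thesis .
qed

lemma emeasure_smoothed_density_slab:
  fixes a b \<epsilon> :: real
  assumes g: "smoothed_density \<phi> g" and b: "\<bar>b\<bar> \<ge> 1" and \<epsilon>: "\<epsilon> \<ge> 0"
  shows "emeasure (density lborel (\<lambda>x. ennreal (g x))) {y. 0 < a + b * y \<and> a + b * y \<le> \<epsilon>}
           \<le> ennreal (\<phi> * \<epsilon>)"
proof -
  let ?A = "{y. 0 < a + b * y \<and> a + b * y \<le> \<epsilon>}"
  define l where "l = min (- a / b) ((\<epsilon> - a) / b)"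
  have "g \<in> borel_measurable borel" and g_le: "\<And>x. g x \<le> \<phi>" and "0 \<le> g 0"
    using g unfolding smoothed_density_def by auto
  then have [measurable]: "g \<in> borel_measurable borel" and \<phi>: "0 \<le> \<phi>"
    by (auto intro: order_trans)
  have "?A \<subseteq> {l..l + \<epsilon> / \<bar>b\<bar>}"
    using b by (cases "b > 0") (auto simp: l_def field_simps min_def)
  then have "emeasure lborel ?A \<le> ennreal (\<epsilon> / \<bar>b\<bar>)"
    using emeasure_mono[of ?A "{l..l + \<epsilon> / \<bar>b\<bar>}" lborel] \<epsilon> by simp
  also have "\<epsilon> / \<bar>b\<bar> \<le> \<epsilon>"
    using b \<epsilon> by (simp add: divide_le_eq mult_le_cancel_left1)
  finally have lebesgue: "emeasure lborel ?A \<le> ennreal \<epsilon>"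
    by (simp add: ennreal_leI order_trans)
  have "emeasure (density lborel (\<lambda>x. ennreal (g x))) ?A \<le> ennreal \<phi> * emeasure lborel ?A"
    by (rule emeasure_density_le_bound) (auto intro: ennreal_leI g_le)
  also have "\<dots> \<le> ennreal \<phi> * ennreal \<epsilon>"
    by (rule mult_left_mono[OF lebesgue]) simp
  finally show ?thesis
    using \<phi> \<epsilon> by (simp add: ennreal_mult)
qed

abbreviation cost_distr :: "nat \<Rightarrow> (nat \<Rightarrow> real \<Rightarrow> real) \<Rightarrow> (nat \<Rightarrow> real) measure" where
  "cost_distr \<nu> f \<equiv> PiM {..<\<nu>} (\<lambda>i. density lborel (\<lambda>x. ennreal (f i x)))"

definition small_gain :: "nat \<Rightarrow> (nat \<Rightarrow> int) \<Rightarrow> real \<Rightarrow> (nat \<Rightarrow> real) set" where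
  "small_gain \<nu> d \<epsilon> = {c. 0 < (\<Sum>i<\<nu>. of_int (d i) * c i) \<and> (\<Sum>i<\<nu>. of_int (d i) * c i) \<le> \<epsilon>}"

lemma small_gain_sets_PiM [measurable]:
  "small_gain \<nu> d \<epsilon> \<inter> space (cost_distr \<nu> f) \<in> sets (cost_distr \<nu> f)"
proof -
  have "small_gain \<nu> d \<epsilon> \<inter> space (cost_distr \<nu> f) =
      {c \<in> space (cost_distr \<nu> f). 0 < (\<Sum>i<\<nu>. of_int (d i) * c i) \<and> (\<Sum>i<\<nu>. of_int (d i) * c i) \<le> \<epsilon>}"
    by (auto simp: small_gain_def)
  also have "\<dots> \<in> sets (cost_distr \<nu> f)"
    by measurable
  finally show ?thesis .
qed

text \<open>Fubini on the coordinate \<open>i\<^sub>0\<close>: for fixed other coordinates the gain is an affine function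
  of \<open>c i\<^sub>0\<close> with integer slope \<open>d i\<^sub>0 \<noteq> 0\<close>.\<close>
lemma emeasure_small_gain_le:
  fixes f :: "nat \<Rightarrow> real \<Rightarrow> real"
  assumes dens: "\<forall>i<\<nu>. smoothed_density \<phi> (f i)" and i0: "i0 < \<nu>" and d0: "d i0 \<noteq> 0"
    and \<epsilon>: "\<epsilon> \<ge> 0"
  shows "emeasure (cost_distr \<nu> f) (small_gain \<nu> d \<epsilon> \<inter> space (cost_distr \<nu> f)) \<le> ennreal (\<phi> * \<epsilon>)"
proof -
  define P where "P = cost_distr \<nu> f"
  \<comment> \<open>the factors are extended beyond \<open>\<nu>\<close> so that \<open>product_sigma_finite\<close> applies\<close>
  define Q where "Q = (\<lambda>i. density lborel (\<lambda>x. ennreal (f (if i < \<nu> then i else i0) x)))"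
  have Q_dens: "smoothed_density \<phi> (f (if i < \<nu> then i else i0))" for i
    using dens i0 by auto
  have Q_prob: "prob_space (Q i)" for i
    unfolding Q_def by (rule smoothed_density_prob_space[OF Q_dens])
  interpret product_sigma_finite Q
    by (simp add: product_sigma_finite_def Q_prob prob_space_imp_sigma_finite)
  define I where "I = {..<\<nu>} - {i0}"
  have I: "finite I" "i0 \<notin> I" "insert i0 I = {..<\<nu>}"
    using i0 by (auto simp: I_def)
  have P_eq: "P = PiM (insert i0 I) Q"
    unfolding P_def I(3) by (rule PiM_cong) (auto simp: Q_def)
  interpret Q_I: prob_space "PiM I Q"
    by (rule prob_space_PiM[OF Q_prob])
  have "emeasure P (small_gain \<nu> d \<epsilon> \<inter> space P) = (\<integral>\<^sup>+ c. indicator (small_gain \<nu> d \<epsilon>) c \<partial>P)"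
    unfolding P_def by (rule nn_integral_indicator'[symmetric]) measurable
  also have "\<dots> = (\<integral>\<^sup>+ x. (\<integral>\<^sup>+ y. indicator (small_gain \<nu> d \<epsilon>) (x(i0 := y)) \<partial>Q i0) \<partial>PiM I Q)"
    unfolding P_eq using small_gain_sets_PiM[of \<nu> d \<epsilon> "\<lambda>i. f (if i < \<nu> then i else i0)"]
    by (intro product_nn_integral_insert[OF I(1,2)]) (simp add: I(3) Q_def borel_measurable_indicator_iff)
  also have "\<dots> \<le> (\<integral>\<^sup>+ x. ennreal (\<phi> * \<epsilon>) \<partial>PiM I Q)"
  proof (rule nn_integral_mono)
    fix x :: "nat \<Rightarrow> real"
    define a where "a = (\<Sum>i\<in>I. of_int (d i) * x i)"
    have gain: "(\<Sum>i<\<nu>. of_int (d i) * (x(i0 := y)) i) = a + of_int (d i0) * y" for y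
    proof -
      have "(\<Sum>i\<in>I. of_int (d i) * (x(i0 := y)) i) = a"
        unfolding a_def using I(2) by (intro sum.cong) auto
      then show ?thesis
        by (simp flip: I(3) add: sum.insert[OF I(1,2)])
    qed
    have "indicator (small_gain \<nu> d \<epsilon>) (x(i0 := y)) =
        (indicator {y. 0 < a + of_int (d i0) * y \<and> a + of_int (d i0) * y \<le> \<epsilon>} y :: ennreal)" for y
      using gain[of y] by (simp add: small_gain_def split: split_indicator)
    then have "(\<integral>\<^sup>+ y. indicator (small_gain \<nu> d \<epsilon>) (x(i0 := y)) \<partial>Q i0)
        = emeasure (Q i0) {y. 0 < a + of_int (d i0) * y \<and> a + of_int (d i0) * y \<le> \<epsilon>}"
      by (simp add: Q_def)
    also have "\<dots> \<le> ennreal (\<phi> * \<epsilon>)"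
      unfolding Q_def using Q_dens[of i0] d0 \<epsilon>
      by (intro emeasure_smoothed_density_slab) auto
    finally show "(\<integral>\<^sup>+ y. indicator (small_gain \<nu> d \<epsilon>) (x(i0 := y)) \<partial>Q i0) \<le> ennreal (\<phi> * \<epsilon>)" .
  qed
  also have "\<dots> = ennreal (\<phi> * \<epsilon>)"
    by (simp add: Q_I.emeasure_space_1)
  finally show ?thesis
    unfolding P_def .
qed

lemma AE_PiM_smoothed_density_bounded:
  assumes "\<forall>i<\<nu>. smoothed_density \<phi> (f i)"
  shows "AE c in cost_distr \<nu> f. \<forall>i<\<nu>. c i \<in> {-1..1}"
proof -
  have "AE c in cost_distr \<nu> f. c i \<in> {-1..1}"
    if i: "i < \<nu>" for i
  proof (rule AE_PiM_component)
    have "f i \<in> borel_measurable borel" and "\<forall>x. x \<notin> {-1..1} \<longrightarrow> f i x = 0"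
      using assms i unfolding smoothed_density_def by auto
    then show "AE y in density lborel (\<lambda>x. ennreal (f i x)). y \<in> {-1..1}"
      by (subst AE_density) (auto intro!: AE_I2)
  qed (use assms i in \<open>auto intro: smoothed_density_prob_space\<close>)
  then show ?thesis
    by (simp add: AE_all_countable)
qed

section \<open>Difference vectors and separability\<close>

definition diff_vec :: "nat \<Rightarrow> config \<times> config \<Rightarrow> nat \<Rightarrow> int" where
  "diff_vec \<nu> e = restrict (\<lambda>i. int (fst (fst e) ! i) - int (fst (snd e) ! i)) {..<\<nu>}"

lemma cost_diff_eq_diff_vec:
  "cost \<nu> c s - cost \<nu> c s' = (\<Sum>i<\<nu>. of_int (diff_vec \<nu> (s, s') i) * c i)"
  unfolding cost_def diff_vec_def by (simp add: sum_subtractf[symmetric] algebra_simps)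

text \<open>Outside the core a difference vector vanishes, and on each coordinate cluster of \<open>\<I>T\<close> it
  takes at most \<open>\<mu>\<close> values; so restricting to the clusters is injective on difference vectors.\<close>
lemma card_diff_vec_image_le:
  assumes T: "finite T" and \<I>T: "finite \<I>T" "card \<I>T \<le> \<beta>" "core \<nu> T \<subseteq> \<Union>\<I>T"
    and sub: "\<forall>I\<in>\<I>T. I \<subseteq> {..<\<nu>}" and div: "\<forall>I\<in>\<I>T. diversity I T \<le> \<mu>" and \<mu>: "\<mu> \<ge> 1"
  shows "card (diff_vec \<nu> ` T) \<le> \<mu> ^ \<beta>"
proof -
  define R where "R I = (\<lambda>(s, s'). restrict (\<lambda>i. int (fst s ! i) - int (fst s' ! i)) I) ` T" for I
  define h where "h d = (\<lambda>I\<in>\<I>T. restrict d I)" for d :: "nat \<Rightarrow> int"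
  have "d i = d' i" if d: "d \<in> diff_vec \<nu> ` T" "d' \<in> diff_vec \<nu> ` T" and eq: "h d = h d'" for d d' i
  proof (cases "i \<in> core \<nu> T")
    case True
    then obtain I where "I \<in> \<I>T" "i \<in> I"
      using \<I>T(3) by auto
    moreover have "restrict d I = restrict d' I"
      using fun_cong[OF eq, of I] \<open>I \<in> \<I>T\<close> by (simp add: h_def)
    ultimately show ?thesis
      by (metis restrict_apply')
  next
    case False
    then have "\<forall>e\<in>T. diff_vec \<nu> e i = restrict (\<lambda>_. 0) {..<\<nu>} i"
      unfolding core_def diff_vec_def by auto
    then show ?thesis
      using d by auto
  qed
  then have inj: "inj_on h (diff_vec \<nu> ` T)"
    by (intro inj_onI) blast
  have "h (diff_vec \<nu> e) \<in> PiE \<I>T R" if "e \<in> T" for e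
  proof -
    have "restrict (diff_vec \<nu> e) I \<in> R I" if "I \<in> \<I>T" for I
    proof -
      have "restrict (diff_vec \<nu> e) I = (\<lambda>(s, s'). restrict (\<lambda>i. int (fst s ! i) - int (fst s' ! i)) I) e"
        using sub that by (auto simp: diff_vec_def fun_eq_iff split: prod.split)
      then show ?thesis
        unfolding R_def using \<open>e \<in> T\<close> by simp
    qed
    then show ?thesis
      unfolding h_def by simp
  qed
  then have "h ` diff_vec \<nu> ` T \<subseteq> PiE \<I>T R"
    by blast
  then have "card (diff_vec \<nu> ` T) \<le> card (PiE \<I>T R)"
    using T \<I>T(1) by (intro card_inj_on_le[OF inj]) (auto simp: R_def intro!: finite_PiE)
  also have "\<dots> = (\<Prod>I\<in>\<I>T. card (R I))"
    by (rule card_PiE[OF \<I>T(1)])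
  also have "\<dots> \<le> \<mu> ^ \<beta>"
    using div by (intro prod_le_power[OF _ \<I>T(2) \<mu>]) (simp add: R_def diversity_def)
  finally show ?thesis .
qed

lemma finite_nbh_edges:
  assumes "finite S" and "\<forall>s\<in>S. N s \<subseteq> S"
  shows "finite (nbh_edges S N)"
  using assms by (rule_tac finite_subset[of _ "S \<times> S"]) (auto simp: nbh_edges_def)

lemma card_diff_vec_nbh_edges_le:
  assumes "separable \<nu> S N lam \<beta> \<mu>" and "finite S" and "\<forall>s\<in>S. N s \<subseteq> S" and "\<mu> \<ge> 1"
  shows "card (diff_vec \<nu> ` nbh_edges S N) \<le> lam * \<mu> ^ \<beta>"
proof -
  obtain \<E> \<I> where \<E>: "finite \<E>" "\<Union>\<E> = nbh_edges S N" "card \<E> \<le> lam"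
    and \<I>: "\<forall>I\<in>\<I>. I \<subseteq> {..<\<nu>}"
    and clusters: "\<forall>T\<in>\<E>. (\<exists>\<I>T \<subseteq> \<I>. finite \<I>T \<and> card \<I>T \<le> \<beta> \<and> core \<nu> T \<subseteq> \<Union>\<I>T) \<and>
        (\<forall>I\<in>\<I>. diversity I T \<le> \<mu>)"
    using assms(1) unfolding separable_def by (elim exE conjE) (rule that; assumption)
  have "card (diff_vec \<nu> ` T) \<le> \<mu> ^ \<beta>" if T: "T \<in> \<E>" for T
  proof -
    obtain \<I>T where \<I>T: "\<I>T \<subseteq> \<I>" "finite \<I>T" "card \<I>T \<le> \<beta>" "core \<nu> T \<subseteq> \<Union>\<I>T"
      using clusters T by meson
    have "finite T"
      using finite_nbh_edges[OF assms(2,3)] \<E>(2) T by (metis Union_upper finite_subset)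
    then show ?thesis
      using \<I>T \<I> clusters T assms(4) by (intro card_diff_vec_image_le[of T \<I>T]) auto
  qed
  then have "(\<Sum>T\<in>\<E>. card (diff_vec \<nu> ` T)) \<le> card \<E> * \<mu> ^ \<beta>"
    using sum_bounded_above[of \<E> "\<lambda>T. card (diff_vec \<nu> ` T)"] by simp
  with card_UN_le[OF \<E>(1)] have "card (\<Union>T\<in>\<E>. diff_vec \<nu> ` T) \<le> card \<E> * \<mu> ^ \<beta>"
    by (rule order_trans)
  also have "\<dots> \<le> lam * \<mu> ^ \<beta>"
    using \<E>(3) by simp
  finally show ?thesis
    by (simp add: \<E>(2)[symmetric] image_Union)
qed

section \<open>Paths in the transition graph\<close>

lemma cost_diff_le:
  assumes "s \<in> configs M \<nu> \<nu>b" and "t \<in> configs M \<nu> \<nu>b" and "\<forall>i<\<nu>. c i \<in> {-1..1}"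
  shows "cost \<nu> c s - cost \<nu> c t \<le> real \<nu> * real M"
proof -
  have "c i * (real (fst s ! i) - real (fst t ! i)) \<le> real M" if i: "i < \<nu>" for i
  proof -
    have "fst s ! i \<le> M" and "fst t ! i \<le> M"
      using assms(1,2) i by (auto simp: configs_def)
    then have "\<bar>real (fst s ! i) - real (fst t ! i)\<bar> \<le> real M"
      by linarith
    moreover have "\<bar>c i\<bar> \<le> 1"
      using assms(3) i by auto
    ultimately have "\<bar>c i\<bar> * \<bar>real (fst s ! i) - real (fst t ! i)\<bar> \<le> 1 * real M"
      by (intro mult_mono) auto
    then show ?thesis
      by (metis abs_ge_self abs_mult mult_1 order_trans)
  qed
  then have "(\<Sum>i<\<nu>. c i * (real (fst s ! i) - real (fst t ! i))) \<le> (\<Sum>i<\<nu>. real M)"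
    by (intro sum_mono) auto
  then show ?thesis
    unfolding cost_def by (simp add: sum_subtractf algebra_simps)
qed

lemma trans_path_nth_mem:
  assumes "p \<in> trans_paths \<nu> c S N" and "j < length p"
  shows "p ! j \<in> S"
  using assms nth_mem unfolding trans_paths_def by blast

lemma trans_path_cost_less:
  assumes "p \<in> trans_paths \<nu> c S N" and "j < j'" and "j' < length p"
  shows "cost \<nu> c (p ! j') < cost \<nu> c (p ! j)"
proof -
  have "(p ! j, p ! Suc j) \<in> trans_edges \<nu> c S N" if "j \<in> {..<length p - 1}" for j
    using assms(1) that unfolding trans_paths_def by blast
  then have "- cost \<nu> c (p ! j) < - cost \<nu> c (p ! Suc j)" if "j \<in> {..<length p - 1}" for j
    using that by (simp add: trans_edges_def)
  moreover have "{j..<j'} \<subseteq> {..<length p - 1}"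
    using assms(3) by auto
  ultimately have "- cost \<nu> c (p ! j) < - cost \<nu> c (p ! j')"
    by (rule lift_Suc_mono_less_ivl[OF _ assms(2)])
  then show ?thesis
    by simp
qed

text \<open>Costs strictly decrease along a path, so its configurations have pairwise distinct cost parts.\<close>
lemma length_trans_path_le:
  assumes p: "p \<in> trans_paths \<nu> c S N" and S: "S \<subseteq> configs M \<nu> \<nu>b"
  shows "length p \<le> (M + 1) ^ \<nu>"
proof -
  have inj: "inj_on (\<lambda>j. fst (p ! j)) {..<length p}"
  proof (rule inj_onI)
    fix j j' assume j: "j \<in> {..<length p}" "j' \<in> {..<length p}" and eq: "fst (p ! j) = fst (p ! j')"
    then have "cost \<nu> c (p ! j) = cost \<nu> c (p ! j')"
      by (simp add: cost_def)
    with j show "j = j'"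
      using trans_path_cost_less[OF p, of j j'] trans_path_cost_less[OF p, of j' j]
      by (cases j j' rule: linorder_cases) auto
  qed
  have "p ! j \<in> configs M \<nu> \<nu>b" if "j < length p" for j
    using trans_path_nth_mem[OF p that] S by blast
  then have "(\<lambda>j. fst (p ! j)) ` {..<length p} \<subseteq> {xs. set xs \<subseteq> {0..M} \<and> length xs = \<nu>}"
    by (auto simp: configs_def)
  then have "card {..<length p} \<le> card {xs. set xs \<subseteq> {0..M} \<and> length xs = \<nu>}"
    by (intro card_inj_on_le[OF inj]) (simp_all add: finite_lists_length_eq)
  then show ?thesis
    by (simp add: card_lists_length_eq)
qed

text \<open>The gains of the \<open>k\<close> steps of a path telescope to at most \<open>\<nu> M\<close>, so the smallest one is at
  most \<open>\<nu> M / k\<close>.\<close>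
lemma trans_path_has_small_gain_step:
  assumes p: "p \<in> trans_paths \<nu> c S N" and S: "S \<subseteq> configs M \<nu> \<nu>b" and c: "\<forall>i<\<nu>. c i \<in> {-1..1}"
    and j: "1 \<le> j" "j \<le> length p - 1"
  shows "\<exists>e\<in>nbh_edges S N. c \<in> small_gain \<nu> (diff_vec \<nu> e) (real \<nu> * real M / real j)"
proof -
  let ?k = "length p - 1"
  let ?gain = "\<lambda>j. cost \<nu> c (p ! j) - cost \<nu> c (p ! Suc j)"
  have steps: "(p ! j, p ! Suc j) \<in> trans_edges \<nu> c S N" if "j < ?k" for j
    using p that by (auto simp: trans_paths_def)
  have "0 < ?k" and "?k < length p"
    using j by auto
  then have "p ! 0 \<in> configs M \<nu> \<nu>b" and "p ! ?k \<in> configs M \<nu> \<nu>b"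
    using trans_path_nth_mem[OF p] S by (meson less_trans subsetD)+
  then have "cost \<nu> c (p ! 0) - cost \<nu> c (p ! ?k) \<le> real \<nu> * real M"
    by (rule cost_diff_le[OF _ _ c])
  then have total: "(\<Sum>j<?k. ?gain j) \<le> real \<nu> * real M"
    by (simp only: sum_lessThan_telescope'[of "\<lambda>j. cost \<nu> c (p ! j)"])
  obtain j0 where j0: "j0 < ?k" "?gain j0 \<le> real \<nu> * real M / real ?k"
  proof (rule ccontr)
    assume "\<not> thesis"
    with that have "\<forall>j0<?k. real \<nu> * real M / real ?k < ?gain j0"
      by force
    then have "(\<Sum>j<?k. real \<nu> * real M / real ?k) < (\<Sum>j<?k. ?gain j)"
      using \<open>0 < ?k\<close> by (intro sum_strict_mono) (auto simp: lessThan_empty_iff)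
    with total show False
      using j by simp
  qed
  moreover have "real \<nu> * real M / real ?k \<le> real \<nu> * real M / real j"
    using j by (intro divide_left_mono) auto
  moreover have "(p ! j0, p ! Suc j0) \<in> nbh_edges S N" and "0 < ?gain j0"
    using steps[OF j0(1)] by (auto simp: trans_edges_def)
  moreover have "(\<Sum>i<\<nu>. of_int (diff_vec \<nu> (p ! j0, p ! Suc j0) i) * c i) = ?gain j0"
    by (rule cost_diff_eq_diff_vec[symmetric])
  ultimately show ?thesis
    unfolding small_gain_def by (intro bexI[of _ "(p ! j0, p ! Suc j0)"]) simp_all
qed

section \<open>The expected number of steps\<close>

text \<open>A path with \<open>k\<close> steps has, for each \<open>j \<le> k\<close>, a step of gain at most \<open>\<nu> M / j\<close>; charge it to the
  pair of \<open>j\<close> and that step's difference vector.\<close>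
lemma max_steps_le_small_gain_count:
  assumes "finite S" and "\<forall>s\<in>S. N s \<subseteq> S" and S: "S \<subseteq> configs M \<nu> \<nu>b" and c: "\<forall>i<\<nu>. c i \<in> {-1..1}"
  shows "max_steps \<nu> c S N \<le> (\<Sum>j=1..(M + 1) ^ \<nu> - 1. \<Sum>d\<in>diff_vec \<nu> ` nbh_edges S N.
           indicator (small_gain \<nu> d (real \<nu> * real M / real j)) c)"
  unfolding max_steps_def
proof (rule SUP_least)
  fix p assume p: "p \<in> trans_paths \<nu> c S N"
  let ?k = "length p - 1"
  let ?count = "\<lambda>j. \<Sum>d\<in>diff_vec \<nu> ` nbh_edges S N. indicator (small_gain \<nu> d (real \<nu> * real M / real j)) c :: ennreal"
  have "1 \<le> ?count j" if j: "j \<in> {1..?k}" for j :: nat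
  proof -
    obtain e where "e \<in> nbh_edges S N" and "c \<in> small_gain \<nu> (diff_vec \<nu> e) (real \<nu> * real M / real j)"
      using trans_path_has_small_gain_step[OF p S c, of j] j by auto
    then have "1 = (indicator (small_gain \<nu> (diff_vec \<nu> e) (real \<nu> * real M / real j)) c :: ennreal)"
      by simp
    also have "\<dots> \<le> ?count j"
      using \<open>e \<in> nbh_edges S N\<close> finite_nbh_edges[OF assms(1,2)] by (intro member_le_sum) auto
    finally show ?thesis .
  qed
  then have "ennreal (real ?k) \<le> (\<Sum>j=1..?k. ?count j)"
    using sum_mono[of "{1..?k}" "\<lambda>_. 1 :: ennreal" ?count] by (simp add: ennreal_of_nat_eq_real_of_nat)
  also have "\<dots> \<le> (\<Sum>j=1..(M + 1) ^ \<nu> - 1. ?count j)"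
    using length_trans_path_le[OF p S] by (intro sum_mono2) auto
  finally show "ennreal (real ?k) \<le> (\<Sum>j=1..(M + 1) ^ \<nu> - 1. ?count j)" .
qed

lemma nn_integral_max_steps_le:
  assumes S: "finite S" "\<forall>s\<in>S. N s \<subseteq> S" "S \<subseteq> configs M \<nu> \<nu>b"
    and dens: "\<forall>i<\<nu>. smoothed_density \<phi> (f i)" and \<phi>: "0 \<le> \<phi>"
  shows "(\<integral>\<^sup>+ c. max_steps \<nu> c S N \<partial>cost_distr \<nu> f)
           \<le> ennreal (real (card (diff_vec \<nu> ` nbh_edges S N)) * \<phi> * real \<nu> * real M * harm ((M + 1) ^ \<nu> - 1))"
proof -
  define D where "D = diff_vec \<nu> ` nbh_edges S N"
  define L where "L = (M + 1) ^ \<nu> - 1"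
  define \<epsilon> where "\<epsilon> j = real \<nu> * real M / real j" for j :: nat
  have small_gain_prob:
    "emeasure (cost_distr \<nu> f) (small_gain \<nu> d (\<epsilon> j) \<inter> space (cost_distr \<nu> f)) \<le> ennreal (\<phi> * \<epsilon> j)"
    for d j
  proof (cases "\<exists>i<\<nu>. d i \<noteq> 0")
    case True
    then obtain i0 where "i0 < \<nu>" and "d i0 \<noteq> 0"
      by blast
    moreover have "0 \<le> \<epsilon> j"
      by (simp add: \<epsilon>_def)
    ultimately show ?thesis
      by (rule emeasure_small_gain_le[OF dens])
  next
    case False
    then have "small_gain \<nu> d (\<epsilon> j) = {}"
      by (simp add: small_gain_def)
    then show ?thesis
      by simp
  qed
  have "(\<integral>\<^sup>+ c. max_steps \<nu> c S N \<partial>cost_distr \<nu> f)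
      \<le> (\<integral>\<^sup>+ c. (\<Sum>j=1..L. \<Sum>d\<in>D. indicator (small_gain \<nu> d (\<epsilon> j)) c) \<partial>cost_distr \<nu> f)"
    using AE_PiM_smoothed_density_bounded[OF dens]
  proof (rule nn_integral_mono_AE[OF AE_mp], intro AE_I2 impI)
    fix c :: "nat \<Rightarrow> real" assume "\<forall>i<\<nu>. c i \<in> {-1..1}"
    then show "max_steps \<nu> c S N \<le> (\<Sum>j=1..L. \<Sum>d\<in>D. indicator (small_gain \<nu> d (\<epsilon> j)) c)"
      unfolding D_def L_def \<epsilon>_def by (rule max_steps_le_small_gain_count[OF S])
  qed
  also have "\<dots> = (\<Sum>j=1..L. \<Sum>d\<in>D. emeasure (cost_distr \<nu> f) (small_gain \<nu> d (\<epsilon> j) \<inter> space (cost_distr \<nu> f)))"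
    using small_gain_sets_PiM
    by (simp add: nn_integral_sum borel_measurable_sum borel_measurable_indicator_iff nn_integral_indicator')
  also have "\<dots> \<le> (\<Sum>j=1..L. \<Sum>d\<in>D. ennreal (\<phi> * \<epsilon> j))"
    by (intro sum_mono small_gain_prob)
  also have "\<dots> = (\<Sum>j=1..L. ennreal (\<Sum>d\<in>D. \<phi> * \<epsilon> j))"
    using \<phi> by (intro sum.cong refl sum_ennreal) (simp add: \<epsilon>_def)
  also have "\<dots> = ennreal (\<Sum>j=1..L. \<Sum>d\<in>D. \<phi> * \<epsilon> j)"
    using \<phi> by (intro sum_ennreal sum_nonneg) (simp add: \<epsilon>_def)
  also have "(\<Sum>j=1..L. \<Sum>d\<in>D. \<phi> * \<epsilon> j) = real (card D) * \<phi> * real \<nu> * real M * harm L"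
    unfolding \<epsilon>_def harm_def by (simp add: sum_distrib_left divide_inverse mult_ac)
  finally show ?thesis
    by (simp add: D_def L_def)
qed

lemma harm_le_one_plus_ln:
  assumes "0 < n"
  shows "harm n \<le> 1 + ln (real n)"
  using euler_mascheroni_sequence_decreasing[of 1 n] assms by (simp add: harm_def)

lemma harm_card_cost_parts_le:
  assumes "M \<ge> 1" and "\<nu> \<ge> 1"
  shows "harm ((M + 1) ^ \<nu> - 1) \<le> 2 * real \<nu> * log 2 (real M + 1)"
proof -
  have "M + 1 \<le> (M + 1) ^ \<nu>"
    using power_increasing[of 1 \<nu> "M + 1"] assms(2) by simp
  then have pos: "0 < (M + 1) ^ \<nu> - 1"
    using assms(1) by linarith
  have "real ((M + 1) ^ \<nu> - 1) \<le> (real M + 1) ^ \<nu>"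
    by (metis diff_le_self of_nat_1 of_nat_add of_nat_le_iff of_nat_power)
  moreover have "0 < real ((M + 1) ^ \<nu> - 1)"
    using pos by (metis of_nat_0_less_iff)
  ultimately have "ln (real ((M + 1) ^ \<nu> - 1)) \<le> ln ((real M + 1) ^ \<nu>)"
    by (intro ln_mono)
  also have "\<dots> = real \<nu> * ln (real M + 1)"
    by (simp add: ln_realpow)
  also have "\<dots> \<le> real \<nu> * log 2 (real M + 1)"
  proof (rule mult_left_mono)
    have "ln 2 \<le> (1::real)" and "0 \<le> ln (real M + 1)"
      using ln_2_less_1 by auto
    then show "ln (real M + 1) \<le> log 2 (real M + 1)"
      unfolding log_def by (simp add: le_divide_eq mult_left_le)
  qed simp
  finally have "harm ((M + 1) ^ \<nu> - 1) \<le> 1 + real \<nu> * log 2 (real M + 1)"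
    using harm_le_one_plus_ln[OF pos] by linarith
  moreover have "1 * 1 \<le> real \<nu> * log 2 (real M + 1)"
    using assms by (intro mult_mono) auto
  ultimately show ?thesis
    by linarith
qed

theorem theorem3p2:
  fixes M \<nu> \<nu>b lam \<beta> \<mu> :: nat
    and \<phi> :: real
    and S :: "config set" and N :: "config \<Rightarrow> config set"
    and f :: "nat \<Rightarrow> real \<Rightarrow> real"
  assumes "\<phi> \<ge> 1/2" and "lam \<ge> 1" and "\<beta> \<ge> 1" and "\<mu> \<ge> 1"
    and "M \<ge> 1" and "\<nu> \<ge> 1"
    and "finite S" and "S \<subseteq> configs M \<nu> \<nu>b"
    and "\<forall>s\<in>S. N s \<subseteq> S"
    and "\<forall>i<\<nu>. smoothed_density \<phi> (f i)"
    and "separable \<nu> S N lam \<beta> \<mu>"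
  shows "(\<integral>\<^sup>+ c. max_steps \<nu> c S N \<partial>(PiM {..<\<nu>} (\<lambda>i. density lborel (\<lambda>x. ennreal (f i x)))))
         \<le> ennreal (3 * real \<mu> ^ \<beta> * real lam * real \<nu> ^ 2 * real M * log 2 (real M + 1) * \<phi>)"
proof -
  have \<phi>: "0 \<le> \<phi>"
    using assms(1) by simp
  have card: "real (card (diff_vec \<nu> ` nbh_edges S N)) \<le> real lam * real \<mu> ^ \<beta>"
    using card_diff_vec_nbh_edges_le[OF assms(11,7,9,4)] by (metis of_nat_le_iff of_nat_mult of_nat_power)
  have "real (card (diff_vec \<nu> ` nbh_edges S N)) * \<phi> * real \<nu> * real M * harm ((M + 1) ^ \<nu> - 1)
      \<le> (real lam * real \<mu> ^ \<beta>) * \<phi> * real \<nu> * real M * (2 * real \<nu> * log 2 (real M + 1))"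
    using \<phi> by (intro mult_mono card harm_card_cost_parts_le[OF assms(5,6)]) (auto intro: harm_nonneg)
  also have "\<dots> \<le> 3 * real \<mu> ^ \<beta> * real lam * real \<nu> ^ 2 * real M * log 2 (real M + 1) * \<phi>"
    using \<phi> assms(5) by (simp add: power2_eq_square mult_ac)
  finally show ?thesis
    using nn_integral_max_steps_le[OF assms(7,9,8,10) \<phi>] by (meson ennreal_leI order_trans)
qed

end
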